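(* Let $A$ be a normed vector space over $\mathbb C$ with $A^\vee$ given the dual norm. On $\mathrm{Max}\,A$, the topology consisting of the sets $\{V\in\mathrm{Max}\,A:F(V)\in\mathcal U\}$, with $\mathcal U\subset\mathrm{Sub}\,A^\vee$ open in the lower Vietoris topology of $A^\vee$, is finer than the topology generated by the sets $\mathbf U_r(a)=\{V\in\mathrm{Max}\,A: d(a,V)>r\}$, $a\in A$, $r>0$.
   Context: $\mathrm{Max}\,A$ is the set of closed subspaces of $A$; $A^\vee$ the continuous dual; $F(V)=\{\phi\in A^\vee:\phi|_V=0\}$. The lower Vietoris topology on the set $\mathrm{Sub}\,A^\vee$ of subspaces of $A^\vee$ is generated by $\{\mathcal V:\mathcal V\cap\mathcal O\ne\emptyset\}$, $\mathcal O\subset A^\vee$ norm-open. *)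

theory Defs
  imports "HOL-Analysis.Analysis"
begin

class cnormed_vector = real_normed_vector +
  fixes scaleC :: "complex \<Rightarrow> 'a \<Rightarrow> 'a"
  assumes scaleC_add_right: "scaleC c (x + y) = scaleC c x + scaleC c y"
    and scaleC_add_left: "scaleC (b + c) x = scaleC b x + scaleC c x"
    and scaleC_scaleC: "scaleC b (scaleC c x) = scaleC (b * c) x"
    and scaleC_of_real: "scaleC (complex_of_real r) x = scaleR r x"
    and norm_scaleC: "norm (scaleC c x) = cmod c * norm x"

definition csubspace :: "'a::cnormed_vector set \<Rightarrow> bool" where
  "csubspace S \<longleftrightarrow> 0 \<in> S \<and> (\<forall>x\<in>S. \<forall>y\<in>S. x + y \<in> S) \<and> (\<forall>c. \<forall>x\<in>S. scaleC c x \<in> S)"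

definition MaxA :: "'a::cnormed_vector set set" where
  "MaxA = {V. csubspace V \<and> closed V}"

definition cdual :: "('a::cnormed_vector \<Rightarrow> complex) set" where
  "cdual = {f. (\<forall>x y. f (x + y) = f x + f y) \<and> (\<forall>c x. f (scaleC c x) = c * f x)
              \<and> (\<exists>K. \<forall>x. cmod (f x) \<le> K * norm x)}"

definition dual_open :: "('a::cnormed_vector \<Rightarrow> complex) set \<Rightarrow> bool" where
  "dual_open Q \<longleftrightarrow> Q \<subseteq> cdual \<and>
     (\<forall>\<phi>\<in>Q. \<exists>e>0. \<forall>\<psi>\<in>cdual. onorm (\<lambda>x. \<psi> x - \<phi> x) < e \<longrightarrow> \<psi> \<in> Q)"

definition SubDual :: "('a::cnormed_vector \<Rightarrow> complex) set set" where
  "SubDual = {S. S \<subseteq> cdual \<and> (\<lambda>x. 0) \<in> S \<and> (\<forall>f\<in>S. \<forall>g\<in>S. (\<lambda>x. f x + g x) \<in> S)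
                 \<and> (\<forall>c. \<forall>f\<in>S. (\<lambda>x. c * f x) \<in> S)}"

text \<open>Subbasis of the lower Vietoris topology on Sub A^\<or> (the whole space is included
  to account for the empty finite intersection).\<close>
definition lower_vietoris_subbasis :: "('a::cnormed_vector \<Rightarrow> complex) set set set" where
  "lower_vietoris_subbasis =
     insert SubDual {{\<V> \<in> SubDual. \<V> \<inter> Q \<noteq> {}} | Q. dual_open Q}"

definition lower_vietoris_open :: "('a::cnormed_vector \<Rightarrow> complex) set set \<Rightarrow> bool" where
  "lower_vietoris_open \<U> \<longleftrightarrow> generate_topology_on lower_vietoris_subbasis \<U>"

definition annih :: "'a::cnormed_vector set \<Rightarrow> ('a \<Rightarrow> complex) set" where
  "annih V = {\<phi> \<in> cdual. \<forall>v\<in>V. \<phi> v = 0}"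

definition Ur :: "real \<Rightarrow> 'a::cnormed_vector \<Rightarrow> 'a set set" where
  "Ur r a = {V \<in> MaxA. infdist a V > r}"

definition dist_topology_open :: "'a::cnormed_vector set set \<Rightarrow> bool" where
  "dist_topology_open W \<longleftrightarrow>
     generate_topology_on (insert MaxA {Ur r a | r a. r > 0}) W"

definition F_topology_open :: "'a::cnormed_vector set set \<Rightarrow> bool" where
  "F_topology_open W \<longleftrightarrow> (\<exists>\<U>. lower_vietoris_open \<U> \<and> W = {V \<in> MaxA. annih V \<in> \<U>})"

end

theory Submission
  imports Defs
begin

text \<open>By Hahn-Banach, for a closed subspace V the distance d(a, V) is attained as
  |\<phi> a| by some \<phi> in F(V) of norm at most 1, while |\<phi> a| \<le> \<parallel>\<phi>\<parallel> d(a, V) for every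
  \<phi> in F(V). Hence d(a, V) > r exactly when F(V) meets the norm-open set
  {\<phi>. r \<parallel>\<phi>\<parallel> < |\<phi> a|}, so every U_r(a) is the preimage under F of a subbasic open set
  of the lower Vietoris topology. Hahn-Banach itself is obtained by Zorn's lemma on
  norm-dominated partial real functionals, followed by complexification
  \<phi> x = u x - i u (i x).\<close>

text \<open>Partial functionals are encoded by their graphs, so that extension is inclusion
  and Zorn's lemma applies directly.\<close>

definition dominated_graph :: "('a::real_normed_vector \<times> real) set \<Rightarrow> bool" where
  "dominated_graph G \<longleftrightarrow> (\<forall>x s t. (x, s) \<in> G \<longrightarrow> (x, t) \<in> G \<longrightarrow> s = t)
    \<and> (\<forall>x s y t. (x, s) \<in> G \<longrightarrow> (y, t) \<in> G \<longrightarrow> (x + y, s + t) \<in> G)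
    \<and> (\<forall>c x s. (x, s) \<in> G \<longrightarrow> (c *\<^sub>R x, c * s) \<in> G)
    \<and> (\<forall>x s. (x, s) \<in> G \<longrightarrow> s \<le> norm x)"

lemma dominated_graphD:
  assumes "dominated_graph G"
  shows dominated_graph_unique: "\<And>x s t. (x, s) \<in> G \<Longrightarrow> (x, t) \<in> G \<Longrightarrow> s = t"
    and dominated_graph_add: "\<And>x s y t. (x, s) \<in> G \<Longrightarrow> (y, t) \<in> G \<Longrightarrow> (x + y, s + t) \<in> G"
    and dominated_graph_scaleR: "\<And>c x s. (x, s) \<in> G \<Longrightarrow> (c *\<^sub>R x, c * s) \<in> G"
    and dominated_graph_le_norm: "\<And>x s. (x, s) \<in> G \<Longrightarrow> s \<le> norm x"
  using assms unfolding dominated_graph_def by blast+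

lemma dominated_graph_zero:
  assumes "dominated_graph G" and "G \<noteq> {}"
  shows "(0, 0) \<in> G"
proof -
  obtain x s where "(x, s) \<in> G" using assms(2) by auto
  then show ?thesis using dominated_graph_scaleR[OF assms(1), of x s 0] by simp
qed

lemma dominated_graph_Union_chain:
  assumes C: "C \<in> chains {G. dominated_graph G}"
  shows "dominated_graph (\<Union>C)"
proof -
  have dom: "dominated_graph G" if "G \<in> C" for G
    using chainsD2[OF C] that by blast
  have common: "\<exists>G\<in>C. p \<in> G \<and> q \<in> G" if "p \<in> \<Union>C" "q \<in> \<Union>C" for p q
    using chainsD[OF C] that by blast
  show ?thesis
    unfolding dominated_graph_def
  proof (intro conjI allI impI)
    fix x s t assume "(x, s) \<in> \<Union>C" "(x, t) \<in> \<Union>C"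
    then show "s = t" using common dom dominated_graph_unique by metis
  next
    fix x s y t assume "(x, s) \<in> \<Union>C" "(y, t) \<in> \<Union>C"
    then show "(x + y, s + t) \<in> \<Union>C" using common dom dominated_graph_add by (metis UnionI)
  next
    fix c x s assume "(x, s) \<in> \<Union>C"
    then show "(c *\<^sub>R x, c * s) \<in> \<Union>C" using dom dominated_graph_scaleR by blast
  next
    fix x s assume "(x, s) \<in> \<Union>C"
    then show "s \<le> norm x" using dom dominated_graph_le_norm by blast
  qed
qed

lemma dominated_graph_extension_constant:
  assumes G: "dominated_graph G" and ne: "G \<noteq> {}"
  obtains c where "\<And>y s. (y, s) \<in> G \<Longrightarrow> s - norm (y - v) \<le> c"
    and "\<And>z t. (z, t) \<in> G \<Longrightarrow> c \<le> norm (z + v) - t"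
proof -
  have key: "s - norm (y - v) \<le> norm (z + v) - t" if "(y, s) \<in> G" "(z, t) \<in> G" for y s z t
  proof -
    have "s + t \<le> norm (y + z)"
      using that G by (meson dominated_graph_add dominated_graph_le_norm)
    also have "\<dots> \<le> norm (y - v) + norm (z + v)"
      using norm_triangle_ineq[of "y - v" "z + v"] by simp
    finally show ?thesis by simp
  qed
  define S where "S = {s - norm (y - v) | y s. (y, s) \<in> G}"
  have "S \<noteq> {}" using dominated_graph_zero[OF G ne] unfolding S_def by blast
  moreover have S_le: "w \<le> norm (z + v) - t" if "w \<in> S" "(z, t) \<in> G" for w z t
    using key that unfolding S_def by blast
  moreover have "bdd_above S"
    using S_le[OF _ dominated_graph_zero[OF G ne]] by (rule bdd_aboveI)
  ultimately show ?thesis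
  proof (intro that[of "Sup S"])
    show "s - norm (y - v) \<le> Sup S" if "(y, s) \<in> G" for y s
      using that \<open>bdd_above S\<close> by (intro cSup_upper) (auto simp: S_def)
    show "Sup S \<le> norm (z + v) - t" if "(z, t) \<in> G" for z t
      using that \<open>S \<noteq> {}\<close> S_le by (intro cSup_least) auto
  qed
qed

definition extend_graph :: "('a::real_normed_vector \<times> real) set \<Rightarrow> 'a \<Rightarrow> real \<Rightarrow> ('a \<times> real) set"
  where "extend_graph G v c = {(y + t *\<^sub>R v, s + t * c) | y s t. (y, s) \<in> G}"

lemma extend_graphI: "(y, s) \<in> G \<Longrightarrow> (y + t *\<^sub>R v, s + t * c) \<in> extend_graph G v c"
  unfolding extend_graph_def by blast

lemma extend_graphE:
  assumes "(x, r) \<in> extend_graph G v c"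
  obtains y s t where "(y, s) \<in> G" "x = y + t *\<^sub>R v" "r = s + t * c"
  using assms unfolding extend_graph_def by blast

lemma extend_graph_coeff_unique:
  assumes G: "dominated_graph G" and v: "v \<notin> Domain G"
    and "(y1, s1) \<in> G" "(y2, s2) \<in> G" and eq: "y1 + t1 *\<^sub>R v = y2 + t2 *\<^sub>R v"
  shows "t1 = t2"
proof (rule ccontr)
  assume ne: "t1 \<noteq> t2"
  have "(y1 + (-1) *\<^sub>R y2, s1 + (-1) * s2) \<in> G"
    using assms by (meson dominated_graph_add dominated_graph_scaleR)
  then have "((1 / (t2 - t1)) *\<^sub>R (y1 - y2), (1 / (t2 - t1)) * (s1 - s2)) \<in> G"
    using G dominated_graph_scaleR by fastforce
  moreover have "y1 - y2 = (t2 - t1) *\<^sub>R v" using eq by (simp add: algebra_simps)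
  ultimately have "(v, (s1 - s2) / (t2 - t1)) \<in> G" using ne by simp
  then show False using v by blast
qed

lemma extend_graph_le_norm:
  assumes G: "dominated_graph G" and ys: "(y, s) \<in> G"
    and lower: "\<And>y s. (y, s) \<in> G \<Longrightarrow> s - norm (y - v) \<le> c"
    and upper: "\<And>z t. (z, t) \<in> G \<Longrightarrow> c \<le> norm (z + v) - t"
  shows "s + t * c \<le> norm (y + t *\<^sub>R v)"
proof -
  have scaled: "((1 / r) *\<^sub>R y, s / r) \<in> G" for r
    using dominated_graph_scaleR[OF G ys, of "1 / r"] by simp
  consider "t = 0" | "t > 0" | "t < 0" by linarith
  then show ?thesis
  proof cases
    case 1
    then show ?thesis using G ys dominated_graph_le_norm by auto
  next
    case 2
    have "norm (y + t *\<^sub>R v) = norm (t *\<^sub>R ((1 / t) *\<^sub>R y + v))"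
      using 2 by (simp add: scaleR_add_right)
    then have "norm (y + t *\<^sub>R v) = t * norm ((1 / t) *\<^sub>R y + v)" using 2 by simp
    moreover have "t * c \<le> t * (norm ((1 / t) *\<^sub>R y + v) - s / t)"
      using upper[OF scaled[of t]] 2 by (simp add: mult_left_mono)
    ultimately show ?thesis using 2 by (simp add: right_diff_distrib)
  next
    case 3
    have "norm (y + t *\<^sub>R v) = norm ((- t) *\<^sub>R ((1 / - t) *\<^sub>R y - v))"
      using 3 by (simp add: scaleR_diff_right)
    then have "norm (y + t *\<^sub>R v) = - t * norm ((1 / - t) *\<^sub>R y - v)" using 3 by simp
    moreover have "- t * (s / - t - norm ((1 / - t) *\<^sub>R y - v)) \<le> - t * c"
      using lower[OF scaled[of "- t"]] 3 by (simp add: mult_left_mono)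
    ultimately show ?thesis using 3 by (simp add: right_diff_distrib)
  qed
qed

lemma dominated_graph_extend_graph:
  assumes G: "dominated_graph G" and v: "v \<notin> Domain G"
    and lower: "\<And>y s. (y, s) \<in> G \<Longrightarrow> s - norm (y - v) \<le> c"
    and upper: "\<And>z t. (z, t) \<in> G \<Longrightarrow> c \<le> norm (z + v) - t"
  shows "dominated_graph (extend_graph G v c)"
  unfolding dominated_graph_def
proof (intro conjI allI impI)
  fix x s t assume xs: "(x, s) \<in> extend_graph G v c" and xt: "(x, t) \<in> extend_graph G v c"
  obtain y1 s1 t1 where h1: "(y1, s1) \<in> G" "x = y1 + t1 *\<^sub>R v" "s = s1 + t1 * c"
    using xs by (rule extend_graphE)
  obtain y2 s2 t2 where h2: "(y2, s2) \<in> G" "x = y2 + t2 *\<^sub>R v" "t = s2 + t2 * c"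
    using xt by (rule extend_graphE)
  have "t1 = t2"
    using h1(2) h2(2) by (intro extend_graph_coeff_unique[OF G v h1(1) h2(1)]) simp
  then show "s = t" using h1 h2 dominated_graph_unique[OF G] by auto
next
  fix x s y t assume xs: "(x, s) \<in> extend_graph G v c" and yt: "(y, t) \<in> extend_graph G v c"
  obtain y1 s1 t1 where h1: "(y1, s1) \<in> G" "x = y1 + t1 *\<^sub>R v" "s = s1 + t1 * c"
    using xs by (rule extend_graphE)
  obtain y2 s2 t2 where h2: "(y2, s2) \<in> G" "y = y2 + t2 *\<^sub>R v" "t = s2 + t2 * c"
    using yt by (rule extend_graphE)
  have "x + y = (y1 + y2) + (t1 + t2) *\<^sub>R v" "s + t = (s1 + s2) + (t1 + t2) * c"
    using h1 h2 by (simp_all add: algebra_simps)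
  then show "(x + y, s + t) \<in> extend_graph G v c"
    using extend_graphI[OF dominated_graph_add[OF G h1(1) h2(1)]] by simp
next
  fix a x s assume "(x, s) \<in> extend_graph G v c"
  then obtain y t r where h: "(y, t) \<in> G" "x = y + r *\<^sub>R v" "s = t + r * c"
    by (rule extend_graphE)
  then have "a *\<^sub>R x = a *\<^sub>R y + (a * r) *\<^sub>R v" "a * s = a * t + (a * r) * c"
    by (simp_all add: algebra_simps)
  then show "(a *\<^sub>R x, a * s) \<in> extend_graph G v c"
    using extend_graphI[OF dominated_graph_scaleR[OF G h(1)]] by simp
next
  fix x s assume "(x, s) \<in> extend_graph G v c"
  then obtain y t r where h: "(y, t) \<in> G" "x = y + r *\<^sub>R v" "s = t + r * c"
    by (rule extend_graphE)
  then show "s \<le> norm x" using extend_graph_le_norm[OF G h(1) lower upper] by simp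
qed

lemma dominated_graph_extends_to_functional:
  fixes G0 :: "('a::real_normed_vector \<times> real) set"
  assumes G0: "dominated_graph G0" and ne: "G0 \<noteq> {}"
  obtains u where "linear u" "\<And>x. u x \<le> norm x" "\<And>x s. (x, s) \<in> G0 \<Longrightarrow> u x = s"
proof -
  let ?A = "{G. dominated_graph G \<and> G0 \<subseteq> G}"
  have "\<forall>C\<in>chains ?A. \<exists>U\<in>?A. \<forall>X\<in>C. X \<subseteq> U"
  proof
    fix C assume C: "C \<in> chains ?A"
    show "\<exists>U\<in>?A. \<forall>X\<in>C. X \<subseteq> U"
    proof (cases "C = {}")
      case True
      then show ?thesis using G0 by blast
    next
      case False
      have "C \<in> chains {G. dominated_graph G}"
        using C unfolding chains_def chain_subset_def by blast
      then have "\<Union>C \<in> ?A"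
        using False chainsD2[OF C] dominated_graph_Union_chain by blast
      then show ?thesis by blast
    qed
  qed
  then obtain M where M: "M \<in> ?A" and maximal: "\<forall>X\<in>?A. M \<subseteq> X \<longrightarrow> X = M"
    using Zorn_Lemma2 by blast
  then have M_dom: "dominated_graph M" and "G0 \<subseteq> M" by auto
  then have "M \<noteq> {}" using ne by blast
  have total: "v \<in> Domain M" for v
  proof (rule ccontr)
    assume v: "v \<notin> Domain M"
    obtain c where lower: "\<And>y s. (y, s) \<in> M \<Longrightarrow> s - norm (y - v) \<le> c"
      and upper: "\<And>z t. (z, t) \<in> M \<Longrightarrow> c \<le> norm (z + v) - t"
      using dominated_graph_extension_constant[OF M_dom \<open>M \<noteq> {}\<close>, where v = v] by blast
    have "M \<subseteq> extend_graph M v c"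
      using extend_graphI[of _ _ M 0 v c] by auto
    then have "extend_graph M v c = M"
      using maximal dominated_graph_extend_graph[OF M_dom v lower upper] \<open>G0 \<subseteq> M\<close> by blast
    moreover have "(v, c) \<in> extend_graph M v c"
      using extend_graphI[OF dominated_graph_zero[OF M_dom \<open>M \<noteq> {}\<close>], of 1 v c] by simp
    ultimately show False using v by blast
  qed
  define u where "u x = (THE s. (x, s) \<in> M)" for x
  have graph: "(x, s) \<in> M \<longleftrightarrow> u x = s" for x s
  proof -
    obtain t where xt: "(x, t) \<in> M" using total by blast
    then have "u x = t"
      unfolding u_def by (rule the_equality) (use xt dominated_graph_unique[OF M_dom] in blast)
    then show ?thesis using xt dominated_graph_unique[OF M_dom] by blast
  qed
  show ?thesis
  proof
    show "linear u"
    proof (rule linearI)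
      show "u (x + y) = u x + u y" for x y
        using dominated_graph_add[OF M_dom] graph by blast
      show "u (r *\<^sub>R x) = r *\<^sub>R u x" for r x
        using dominated_graph_scaleR[OF M_dom] graph by simp
    qed
    show "u x \<le> norm x" for x
      using dominated_graph_le_norm[OF M_dom] graph by blast
    show "u x = s" if "(x, s) \<in> G0" for x s
      using that \<open>G0 \<subseteq> M\<close> graph by blast
  qed
qed

lemma scaleC_zero_left [simp]: "scaleC 0 (x::'a::cnormed_vector) = 0"
  using scaleC_of_real[of 0 x] by simp

lemma scaleC_one [simp]: "scaleC 1 (x::'a::cnormed_vector) = x"
  using scaleC_of_real[of 1 x] by simp

lemma scaleC_minus_one: "scaleC (-1) (x::'a::cnormed_vector) = - x"
  using scaleC_of_real[of "-1" x] by simp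

lemma scaleC_diff_right: "scaleC c (x - y) = scaleC c x - scaleC c (y::'a::cnormed_vector)"
  using scaleC_add_right[of c "x - y" y] by (simp add: eq_diff_eq)

lemma scaleC_diff_left: "scaleC (b - c) x = scaleC b x - scaleC c (x::'a::cnormed_vector)"
  using scaleC_add_left[of "b - c" c x] by (simp add: eq_diff_eq)

lemma scaleR_scaleC: "r *\<^sub>R scaleC c x = scaleC (of_real r * c) (x::'a::cnormed_vector)"
  by (metis scaleC_of_real scaleC_scaleC)

lemma scaleC_Re_Im: "scaleC c x = Re c *\<^sub>R x + Im c *\<^sub>R scaleC \<i> (x::'a::cnormed_vector)"
proof -
  have "scaleC c x = scaleC (of_real (Re c) + of_real (Im c) * \<i>) x"
    by (rule arg_cong[where f = "\<lambda>c. scaleC c x"]) (simp add: complex_eq_iff)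
  also have "\<dots> = Re c *\<^sub>R x + Im c *\<^sub>R scaleC \<i> x"
    by (simp only: scaleC_add_left scaleC_of_real scaleR_scaleC)
  finally show ?thesis .
qed

lemma csubspace_scaleR: "csubspace V \<Longrightarrow> v \<in> V \<Longrightarrow> r *\<^sub>R v \<in> V"
  unfolding csubspace_def by (simp flip: scaleC_of_real)

lemma csubspace_diff: "csubspace V \<Longrightarrow> v \<in> V \<Longrightarrow> w \<in> V \<Longrightarrow> v - w \<in> V"
  unfolding csubspace_def by (metis scaleC_minus_one diff_conv_add_uminus)

lemma Re_mult_infdist_le_norm:
  assumes V: "csubspace V" and v: "v \<in> V"
  shows "Re l * infdist a V \<le> norm (v + scaleC l a)"
proof (cases "l = 0")
  case True
  then show ?thesis by simp
next
  case False
  define w where "w = scaleC (- 1 / l) v"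
  have "w \<in> V" using V v unfolding w_def csubspace_def by blast
  then have "infdist a V \<le> norm (a - w)" using infdist_le[of w V a] by (simp add: dist_norm)
  moreover have "scaleC l (a - w) = v + scaleC l a"
    using False unfolding w_def by (simp add: scaleC_diff_right scaleC_scaleC scaleC_minus_one)
  then have "norm (v + scaleC l a) = cmod l * norm (a - w)" by (metis norm_scaleC)
  moreover have "Re l * infdist a V \<le> cmod l * infdist a V"
    by (simp add: mult_right_mono complex_Re_le_cmod infdist_nonneg)
  ultimately show ?thesis by (metis mult_left_mono norm_ge_zero order_trans)
qed

lemma dominated_graph_infdist:
  assumes V: "csubspace V" and a: "a \<notin> V"
  shows "dominated_graph {(v + scaleC l a, Re l * infdist a V) | v l. v \<in> V}"
    (is "dominated_graph ?G")
  unfolding dominated_graph_def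
proof (intro conjI allI impI)
  have coeff_unique: "l1 = l2"
    if "v1 \<in> V" "v2 \<in> V" and eq: "v1 + scaleC l1 a = v2 + scaleC l2 a" for v1 v2 l1 l2
  proof (rule ccontr)
    assume "l1 \<noteq> l2"
    have "scaleC (l1 - l2) a = v2 - v1" using eq by (simp add: scaleC_diff_left algebra_simps)
    have "a = scaleC (1 / (l1 - l2) * (l1 - l2)) a" using \<open>l1 \<noteq> l2\<close> by simp
    also have "\<dots> = scaleC (1 / (l1 - l2)) (v2 - v1)"
      by (simp only: \<open>scaleC (l1 - l2) a = v2 - v1\<close> flip: scaleC_scaleC)
    finally have "a = scaleC (1 / (l1 - l2)) (v2 - v1)" .
    moreover have "v2 - v1 \<in> V" using csubspace_diff[OF V] that by blast
    ultimately show False using a V unfolding csubspace_def by blast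
  qed
  fix x s t assume "(x, s) \<in> ?G" "(x, t) \<in> ?G"
  then show "s = t" using coeff_unique by blast
next
  fix x s y t assume "(x, s) \<in> ?G" "(y, t) \<in> ?G"
  then obtain v1 l1 v2 l2 where "v1 \<in> V" "v2 \<in> V" "x = v1 + scaleC l1 a" "y = v2 + scaleC l2 a"
    "s = Re l1 * infdist a V" "t = Re l2 * infdist a V" by blast
  moreover have "v1 + v2 \<in> V" using V \<open>v1 \<in> V\<close> \<open>v2 \<in> V\<close> unfolding csubspace_def by blast
  ultimately show "(x + y, s + t) \<in> ?G"
    by (auto intro!: exI[of _ "v1 + v2"] exI[of _ "l1 + l2"] simp: scaleC_add_left algebra_simps)
next
  fix c x s assume "(x, s) \<in> ?G"
  then obtain v l where "v \<in> V" "x = v + scaleC l a" "s = Re l * infdist a V" by blast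
  moreover have "c *\<^sub>R v \<in> V" using csubspace_scaleR[OF V \<open>v \<in> V\<close>] .
  ultimately show "(c *\<^sub>R x, c * s) \<in> ?G"
    by (auto intro!: exI[of _ "c *\<^sub>R v"] exI[of _ "of_real c * l"] simp: scaleR_scaleC scaleR_add_right)
next
  fix x s assume "(x, s) \<in> ?G"
  then show "s \<le> norm x" using Re_mult_infdist_le_norm[OF V] by blast
qed

lemma bounded_linear_cdual: "\<phi> \<in> cdual \<Longrightarrow> bounded_linear \<phi>"
proof -
  assume "\<phi> \<in> cdual"
  then obtain K where add: "\<And>x y. \<phi> (x + y) = \<phi> x + \<phi> y"
    and scale: "\<And>c x. \<phi> (scaleC c x) = c * \<phi> x" and K: "\<And>x. cmod (\<phi> x) \<le> K * norm x"
    unfolding cdual_def by blast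
  show "bounded_linear \<phi>"
  proof (rule bounded_linear_intro[of \<phi> K])
    show "\<phi> (r *\<^sub>R x) = r *\<^sub>R \<phi> x" for r x
      using scale[of "of_real r" x] by (simp add: scaleC_of_real scaleR_conv_of_real)
    show "norm (\<phi> x) \<le> norm x * K" for x
      using K[of x] by (simp add: mult.commute)
  qed (rule add)
qed

lemma annih_SubDual: "annih V \<in> SubDual"
proof -
  have "(\<lambda>x. f x + g x) \<in> cdual" if f: "f \<in> cdual" and g: "g \<in> cdual" for f g
  proof -
    obtain K where K: "\<And>x. cmod (f x) \<le> K * norm x"
      using f unfolding cdual_def by blast
    obtain L where L: "\<And>x. cmod (g x) \<le> L * norm x"
      using g unfolding cdual_def by blast
    have "cmod (f x + g x) \<le> (K + L) * norm x" for x
      by (rule order_trans[OF norm_triangle_ineq]) (simp add: distrib_right add_mono K L)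
    then show ?thesis using f g unfolding cdual_def by (auto simp: distrib_left)
  qed
  moreover have "(\<lambda>x. c * f x) \<in> cdual" if f: "f \<in> cdual" for c f
  proof -
    obtain K where "\<And>x. cmod (f x) \<le> K * norm x"
      using f unfolding cdual_def by blast
    then have "cmod (c * f x) \<le> (cmod c * K) * norm x" for x
      by (simp add: norm_mult mult.assoc mult_left_mono)
    then show ?thesis using f unfolding cdual_def by (auto simp: distrib_left)
  qed
  moreover have "(\<lambda>x. 0) \<in> cdual"
    unfolding cdual_def by (auto intro: exI[of _ 0])
  ultimately show ?thesis
    unfolding SubDual_def annih_def by auto
qed

lemma complexification:
  fixes u :: "'a::cnormed_vector \<Rightarrow> real"
  assumes u: "linear u" and u_le: "\<And>x. u x \<le> norm x"
  defines "\<phi> \<equiv> \<lambda>x. Complex (u x) (- u (scaleC \<i> x))"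
  shows "\<phi> \<in> cdual" and "\<And>x. cmod (\<phi> x) \<le> norm x"
proof -
  have u_scaleC: "u (scaleC c x) = Re c * u x + Im c * u (scaleC \<i> x)" for c x
    using scaleC_Re_Im[of c x] by (simp add: linear_add[OF u] linear_scale[OF u])
  have scale: "\<phi> (scaleC c x) = c * \<phi> x" for c x
  proof -
    have "u (scaleC \<i> (scaleC c x)) = - Im c * u x + Re c * u (scaleC \<i> x)"
      using u_scaleC[of "\<i> * c" x] by (simp add: scaleC_scaleC)
    then show ?thesis unfolding \<phi>_def using u_scaleC[of c x] by (simp add: complex_eq_iff algebra_simps)
  qed
  show bound: "cmod (\<phi> x) \<le> norm x" for x
  proof (cases "\<phi> x = 0")
    case False
    define c where "c = cnj (\<phi> x) / cmod (\<phi> x)"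
    have "c * \<phi> x = \<phi> x * cnj (\<phi> x) / of_real (cmod (\<phi> x))"
      unfolding c_def by (simp add: divide_inverse ac_simps)
    also have "\<dots> = of_real (cmod (\<phi> x) ^ 2) / of_real (cmod (\<phi> x))"
      by (simp only: complex_norm_square)
    also have "\<dots> = of_real (cmod (\<phi> x))"
      using False by (simp add: power2_eq_square)
    finally have "c * \<phi> x = of_real (cmod (\<phi> x))" .
    then have "cmod (\<phi> x) = Re (\<phi> (scaleC c x))"
      using scale[of c x] by simp
    also have "\<dots> = u (scaleC c x)"
      unfolding \<phi>_def by simp
    also have "\<dots> \<le> norm (scaleC c x)" by (rule u_le)
    also have "\<dots> = norm x"
      using False unfolding c_def by (simp add: norm_scaleC norm_divide)
    finally show ?thesis .
  qed simp
  show "\<phi> \<in> cdual"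
    unfolding cdual_def
  proof (intro CollectI conjI allI exI)
    show "\<phi> (x + y) = \<phi> x + \<phi> y" for x y
      unfolding \<phi>_def by (simp add: linear_add[OF u] scaleC_add_right complex_eq_iff)
    show "\<phi> (scaleC c x) = c * \<phi> x" for c x by (rule scale)
    show "cmod (\<phi> x) \<le> 1 * norm x" for x using bound by simp
  qed
qed

lemma annih_attains_infdist:
  fixes a :: "'a::cnormed_vector"
  assumes V: "csubspace V"
  obtains \<phi> where "\<phi> \<in> annih V" "\<phi> a = of_real (infdist a V)" "\<And>x. cmod (\<phi> x) \<le> norm x"
proof (cases "a \<in> V")
  case True
  have "(\<lambda>x. 0) \<in> annih V"
    unfolding annih_def cdual_def by (auto intro: exI[of _ 0])
  then show ?thesis using True by (intro that[of "\<lambda>x. 0"]) auto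
next
  case False
  let ?G = "{(v + scaleC l a, Re l * infdist a V) | v l. v \<in> V}"
  have "0 \<in> V" using V unfolding csubspace_def by blast
  then have in_G: "(v + scaleC l a, Re l * infdist a V) \<in> ?G" if "v \<in> V" for v l
    using that by blast
  obtain u where u: "linear u" "\<And>x. u x \<le> norm x" and u_G: "\<And>x s. (x, s) \<in> ?G \<Longrightarrow> u x = s"
    using dominated_graph_extends_to_functional[OF dominated_graph_infdist[OF V False]]
      in_G[OF \<open>0 \<in> V\<close>] by blast
  define \<phi> where "\<phi> = (\<lambda>x. Complex (u x) (- u (scaleC \<i> x)))"
  have "\<phi> \<in> cdual" "\<And>x. cmod (\<phi> x) \<le> norm x"
    using complexification[OF u] unfolding \<phi>_def by blast+
  moreover have "\<phi> v = 0" if "v \<in> V" for v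
  proof -
    have iv: "scaleC \<i> v \<in> V" using V that unfolding csubspace_def by blast
    show ?thesis
      using u_G[OF in_G[OF that, of 0]] u_G[OF in_G[OF iv, of 0]]
      unfolding \<phi>_def by (simp add: complex_eq_iff)
  qed
  moreover have "\<phi> a = of_real (infdist a V)"
    using u_G[OF in_G[OF \<open>0 \<in> V\<close>, of 1]] u_G[OF in_G[OF \<open>0 \<in> V\<close>, of \<i>]]
    unfolding \<phi>_def by (simp add: complex_eq_iff)
  ultimately show ?thesis by (intro that[of \<phi>]) (auto simp: annih_def)
qed

lemma norm_le_onorm_mult_infdist:
  assumes \<phi>: "bounded_linear \<phi>" and vanish: "\<And>v. v \<in> V \<Longrightarrow> \<phi> v = 0" and "V \<noteq> {}"
  shows "norm (\<phi> a) \<le> onorm \<phi> * infdist a V"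
proof -
  have le_dist: "norm (\<phi> a) \<le> onorm \<phi> * dist a v" if "v \<in> V" for v
  proof -
    have "\<phi> a = \<phi> (a - v)"
      using vanish[OF that] by (simp add: linear_diff[OF bounded_linear.linear[OF \<phi>]])
    then show ?thesis using onorm[OF \<phi>, of "a - v"] by (simp add: dist_norm)
  qed
  show ?thesis
  proof (cases "onorm \<phi> = 0")
    case True
    then show ?thesis using le_dist \<open>V \<noteq> {}\<close> by fastforce
  next
    case False
    then have pos: "onorm \<phi> > 0" using onorm_pos_le[OF \<phi>] by linarith
    have "norm (\<phi> a) / onorm \<phi> \<le> infdist a V"
      unfolding infdist_notempty[OF \<open>V \<noteq> {}\<close>]
      using le_dist pos \<open>V \<noteq> {}\<close> by (intro cINF_greatest) (auto simp: pos_divide_le_eq mult.commute)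
    then show ?thesis using pos by (simp add: pos_divide_le_eq mult.commute)
  qed
qed

lemma onorm_gap_lower_bound:
  assumes \<phi>: "bounded_linear \<phi>" and \<psi>: "bounded_linear \<psi>" and "0 \<le> r"
  shows "norm (\<phi> a) - r * onorm \<phi> - (norm a + r) * onorm (\<lambda>x. \<psi> x - \<phi> x)
    \<le> norm (\<psi> a) - r * onorm \<psi>"
proof -
  let ?\<delta> = "onorm (\<lambda>x. \<psi> x - \<phi> x)"
  have diff: "bounded_linear (\<lambda>x. \<psi> x - \<phi> x)" using bounded_linear_sub[OF \<psi> \<phi>] .
  have "norm (\<phi> a) \<le> norm (\<psi> a) + norm (\<psi> a - \<phi> a)"
    using norm_triangle_sub[of "\<phi> a" "\<psi> a"] by (simp add: norm_minus_commute)
  also have "\<dots> \<le> norm (\<psi> a) + ?\<delta> * norm a"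
    using onorm[OF diff, of a] by simp
  finally have "norm (\<phi> a) \<le> norm (\<psi> a) + ?\<delta> * norm a" .
  moreover have "onorm \<psi> \<le> ?\<delta> + onorm \<phi>"
    using onorm_triangle[OF diff \<phi>] by simp
  then have "r * onorm \<psi> \<le> r * (?\<delta> + onorm \<phi>)" using \<open>0 \<le> r\<close> by (rule mult_left_mono)
  ultimately show ?thesis by (simp add: algebra_simps)
qed

definition Ur_dual :: "real \<Rightarrow> 'a::cnormed_vector \<Rightarrow> ('a \<Rightarrow> complex) set" where
  "Ur_dual r a = {\<phi> \<in> cdual. r * onorm \<phi> < cmod (\<phi> a)}"

lemma dual_open_Ur_dual:
  assumes "0 \<le> r"
  shows "dual_open (Ur_dual r a)"
  unfolding dual_open_def
proof (intro conjI ballI)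
  show "Ur_dual r a \<subseteq> cdual" unfolding Ur_dual_def by blast
next
  fix \<phi> assume "\<phi> \<in> Ur_dual r a"
  then have \<phi>: "\<phi> \<in> cdual" and gap: "0 < cmod (\<phi> a) - r * onorm \<phi>"
    unfolding Ur_dual_def by auto
  define e where "e = (cmod (\<phi> a) - r * onorm \<phi>) / (norm a + r + 1)"
  have "0 < norm a + r + 1" using \<open>0 \<le> r\<close> by (simp add: add_nonneg_pos)
  then have "e > 0" and e_gap: "(norm a + r) * e < cmod (\<phi> a) - r * onorm \<phi>"
    using gap unfolding e_def by (auto simp: field_simps)
  have "\<psi> \<in> Ur_dual r a" if \<psi>: "\<psi> \<in> cdual" and close: "onorm (\<lambda>x. \<psi> x - \<phi> x) < e" for \<psi>
  proof -
    have "(norm a + r) * onorm (\<lambda>x. \<psi> x - \<phi> x) \<le> (norm a + r) * e"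
      using close \<open>0 \<le> r\<close> by (simp add: mult_left_mono)
    then show ?thesis
      using onorm_gap_lower_bound[OF bounded_linear_cdual[OF \<phi>] bounded_linear_cdual[OF \<psi>] \<open>0 \<le> r\<close>, of a]
        e_gap \<psi> unfolding Ur_dual_def by auto
  qed
  then show "\<exists>e>0. \<forall>\<psi>\<in>cdual. onorm (\<lambda>x. \<psi> x - \<phi> x) < e \<longrightarrow> \<psi> \<in> Ur_dual r a"
    using \<open>e > 0\<close> by blast
qed

lemma Ur_eq_annih_meets_Ur_dual:
  assumes "0 \<le> r"
  shows "Ur r a = {V \<in> MaxA. annih V \<inter> Ur_dual r a \<noteq> {}}"
proof (intro set_eqI iffI)
  fix V assume "V \<in> Ur r a"
  then have V: "V \<in> MaxA" and far: "r < infdist a V" unfolding Ur_def by auto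
  then obtain \<phi> where \<phi>: "\<phi> \<in> annih V" and \<phi>_a: "\<phi> a = of_real (infdist a V)"
    and \<phi>_le: "\<And>x. cmod (\<phi> x) \<le> norm x"
    using annih_attains_infdist[of V a] unfolding MaxA_def by blast
  have "\<phi> \<in> cdual" using \<phi> unfolding annih_def by blast
  have "onorm \<phi> \<le> 1" using \<phi>_le by (intro onorm_bound) auto
  then have "r * onorm \<phi> \<le> r" using \<open>0 \<le> r\<close> by (rule mult_left_le)
  also have "\<dots> < cmod (\<phi> a)" using far \<phi>_a by (simp add: infdist_nonneg)
  finally show "V \<in> {V \<in> MaxA. annih V \<inter> Ur_dual r a \<noteq> {}}"
    using V \<phi> \<open>\<phi> \<in> cdual\<close> unfolding Ur_dual_def by blast
next
  fix V assume "V \<in> {V \<in> MaxA. annih V \<inter> Ur_dual r a \<noteq> {}}"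
  then obtain \<phi> where V: "V \<in> MaxA" and \<phi>: "\<phi> \<in> annih V" and lt: "r * onorm \<phi> < cmod (\<phi> a)"
    unfolding Ur_dual_def by blast
  have bl: "bounded_linear \<phi>" using \<phi> bounded_linear_cdual unfolding annih_def by blast
  have "V \<noteq> {}" using V unfolding MaxA_def csubspace_def by blast
  then have le: "cmod (\<phi> a) \<le> onorm \<phi> * infdist a V"
    using norm_le_onorm_mult_infdist[OF bl] \<phi> unfolding annih_def by blast
  then have "r * onorm \<phi> < infdist a V * onorm \<phi>"
    using lt by (simp add: mult.commute)
  then have "r < infdist a V"
    using onorm_pos_le[OF bl] by (simp add: mult_less_cancel_right)
  then show "V \<in> Ur r a" using V unfolding Ur_def by blast
qed

lemma F_topology_open_iff_pullback:
  "F_topology_open W \<longleftrightarrow>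
    openin (pullback_topology MaxA annih (topology_generated_by lower_vietoris_subbasis)) W"
  unfolding F_topology_open_def lower_vietoris_open_def openin_pullback_topology
    openin_topology_generated_by_iff by blast

lemma dist_subbasis_eq_pullback:
  assumes "S \<in> insert MaxA {Ur r a | r a. r > 0}"
  obtains \<U> where "\<U> \<in> lower_vietoris_subbasis" "S = annih -` \<U> \<inter> MaxA"
proof -
  consider "S = MaxA" | r a where "r > 0" "S = Ur r a" using assms by blast
  then show ?thesis
  proof cases
    case 1
    then have "S = annih -` SubDual \<inter> MaxA" using annih_SubDual by blast
    then show ?thesis by (intro that) (simp_all add: lower_vietoris_subbasis_def)
  next
    case 2
    then have "S = annih -` {\<V> \<in> SubDual. \<V> \<inter> Ur_dual r a \<noteq> {}} \<inter> MaxA"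
      using Ur_eq_annih_meets_Ur_dual[of r a] annih_SubDual by auto
    moreover have "{\<V> \<in> SubDual. \<V> \<inter> Ur_dual r a \<noteq> {}} \<in> lower_vietoris_subbasis"
      using dual_open_Ur_dual[of r a] 2 unfolding lower_vietoris_subbasis_def by auto
    ultimately show ?thesis by (rule that[rotated])
  qed
qed

theorem lemma7p24:
  fixes W :: "'a::cnormed_vector set set"
  assumes "dist_topology_open W"
  shows "F_topology_open W"
  unfolding F_topology_open_iff_pullback
proof (rule generate_topology_on_coarsest[OF istopology_openin _ assms[unfolded dist_topology_open_def]])
  fix S :: "'a set set" assume "S \<in> insert MaxA {Ur r a | r a. r > 0}"
  then obtain \<U> where "\<U> \<in> lower_vietoris_subbasis" and "S = annih -` \<U> \<inter> MaxA"
    by (rule dist_subbasis_eq_pullback)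
  then show "openin (pullback_topology MaxA annih (topology_generated_by lower_vietoris_subbasis)) S"
    by (metis openin_pullback_topology generate_topology_on.Basis openin_topology_generated_by_iff)
qed

end
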